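(* Let $\lambda\in P$, $1\le k\le n-1$, $r\ge2$, $m\ge1$. If $\lambda$ has a neighborhood of type $(m(k+1),m(r-1))$, then $\lambda$ has a neighborhood of type $(k+1,r-1)$. If $d\ge1$ and $\lambda$ has a neighborhood of type $(m(k+1)+d,m(r-1))$, then $\lambda$ has two (distinct) neighborhoods of type $(k+1,r-1)$.
   Context: Let $P=\mathbb Z^n$. For $\lambda\in P$, $\rho(\lambda)$ is the unique permutation of $(\frac{n-1}2,\frac{n-3}2,\dots,-\frac{n-1}2)$ with $\rho(\lambda)_i>\rho(\lambda)_j$ iff $\lambda_i>\lambda_j$ or ($\lambda_i=\lambda_j$ and $i<j$). For integers $a\ge2,b\ge1$, an ordered pair $(i,j)$ is a neighborhood of type $(a,b)$ in $\lambda$ if $\rho(\lambda)_i-\rho(\lambda)_j=a-1$ and either $\lambda_i-\lambda_j\le b-1$, or $\lambda_i-\lambda_j=b$ and $j<i$. *)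

theory Defs
  imports Main "HOL.Real"
begin

text \<open>Elements of P = Z^n are represented as integer lists of length n,
  indexed 0..n-1 (only the relative order of indices matters).\<close>

definition rho :: "int list \<Rightarrow> nat \<Rightarrow> real" where
  "rho lam i = (real (length lam) - 1) / 2
     - real (card {j. j < length lam \<and> (lam!j > lam!i \<or> (lam!j = lam!i \<and> j < i))})"

definition is_nbhd :: "int list \<Rightarrow> nat \<Rightarrow> nat \<Rightarrow> nat \<times> nat \<Rightarrow> bool" where
  "is_nbhd lam a b p = (case p of (i, j) \<Rightarrow>
     i < length lam \<and> j < length lam \<and>
     rho lam i - rho lam j = real a - 1 \<and>
     (lam!i - lam!j \<le> int b - 1 \<or> (lam!i - lam!j = int b \<and> j < i)))"

definition has_nbhd :: "int list \<Rightarrow> nat \<Rightarrow> nat \<Rightarrow> bool" where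
  "has_nbhd lam a b = (\<exists>p. is_nbhd lam a b p)"

end

theory Submission
  imports Defs
begin

text \<open>List the indices of \<open>\<lambda>\<close> by increasing rank, i.e. decreasing \<open>\<rho>\<close>. Along this list the
  integer key \<open>\<lambda>\<^sub>i n - i\<close> strictly decreases, and \<open>(i, j)\<close> is a neighbourhood of type
  \<open>(a, b)\<close> exactly when \<open>j\<close> comes \<open>a - 1\<close> places after \<open>i\<close> and the key drops by less than
  \<open>b n\<close>. A neighbourhood of type \<open>(m(k+1), m(r-1))\<close> is thus a run of \<open>m\<close> consecutive blocks of
  \<open>k + 1\<close> places whose total key drop is below \<open>m (r-1) n\<close>; since the drops of the blocks add
  up to at most the total, one block drops by less than \<open>(r-1) n\<close>, which is a neighbourhood
  of type \<open>(k+1, r-1)\<close>. With \<open>d \<ge> 1\<close> spare places the run can also start one place later,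
  giving a second such block in a different residue class modulo \<open>k + 1\<close>.\<close>

lemma block_with_small_drop:
  fixes f :: "nat \<Rightarrow> int"
  assumes antitone: "\<And>x y. a \<le> x \<Longrightarrow> x \<le> y \<Longrightarrow> y \<le> b \<Longrightarrow> f y \<le> f x"
    and "0 < m" and "a \<le> s" and "s + m * (k + 1) \<le> b + 1"
    and "f a - f b < int m * C"
  shows "\<exists>j<m. f (s + j * (k + 1)) - f (s + j * (k + 1) + k) < C"
  using assms
proof (induction m arbitrary: a s)
  case 0
  then show ?case by simp
next
  case (Suc m)
  have "f s \<le> f a" "f b \<le> f (s + k)" using Suc.prems(1,3,4) by auto
  show ?case
  proof (cases "f s - f (s + k) < C")
    case True
    then show ?thesis by auto
  next
    case big_first_block: False
    have "m \<noteq> 0"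
    proof
      assume "m = 0"
      then have "f a - f b < C" using Suc.prems(5) by simp
      then show False using big_first_block \<open>f s \<le> f a\<close> \<open>f b \<le> f (s + k)\<close> by linarith
    qed
    have "f (s + k + 1) \<le> f (s + k)" using Suc.prems(1,3,4) \<open>m \<noteq> 0\<close> by auto
    then have "f (s + k + 1) - f b < int m * C"
      using Suc.prems(5) big_first_block \<open>f s \<le> f a\<close> by (simp add: algebra_simps)
    then obtain j where "j < m" "f (s + k + 1 + j * (k + 1)) - f (s + k + 1 + j * (k + 1) + k) < C"
      using Suc.IH[of "s + k + 1" "s + k + 1"] Suc.prems(1,3,4) \<open>m \<noteq> 0\<close> by auto
    then show ?thesis by (intro exI[of _ "Suc j"]) (auto simp: algebra_simps)
  qed
qed

definition rank :: "(nat \<Rightarrow> 'a::linorder) \<Rightarrow> nat \<Rightarrow> nat \<Rightarrow> nat" where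
  "rank g n i = card {j. j < n \<and> g i < g j}"

definition unrank :: "(nat \<Rightarrow> 'a::linorder) \<Rightarrow> nat \<Rightarrow> nat \<Rightarrow> nat" where
  "unrank g n = inv_into {..<n} (rank g n)"

lemma rank_less_rank:
  assumes "i < n" "j < n" "g i < g j"
  shows "rank g n j < rank g n i"
  unfolding rank_def
proof (rule psubset_card_mono)
  show "{l. l < n \<and> g j < g l} \<subset> {l. l < n \<and> g i < g l}"
    using assms by auto
qed simp

lemma rank_less: "i < n \<Longrightarrow> rank g n i < n"
proof -
  assume "i < n"
  have "{j. j < n \<and> g i < g j} \<subseteq> {..<n} - {i}" by auto
  then have "rank g n i \<le> card ({..<n} - {i})" unfolding rank_def by (intro card_mono) auto
  then show ?thesis using \<open>i < n\<close> by simp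
qed

lemma bij_betw_rank:
  assumes "inj_on g {..<n}"
  shows "bij_betw (rank g n) {..<n} {..<n}"
proof -
  have "inj_on (rank g n) {..<n}"
  proof (rule inj_onI)
    fix i j assume "i \<in> {..<n}" "j \<in> {..<n}" "rank g n i = rank g n j"
    then show "i = j"
      using assms rank_less_rank[of i n j g] rank_less_rank[of j n i g]
      by (metis inj_onD lessThan_iff less_irrefl neqE)
  qed
  moreover have "rank g n ` {..<n} \<subseteq> {..<n}" by (auto simp: rank_less)
  ultimately show ?thesis by (simp add: bij_betw_def endo_inj_surj)
qed

lemma bij_betw_unrank:
  "inj_on g {..<n} \<Longrightarrow> bij_betw (unrank g n) {..<n} {..<n}"
  unfolding unrank_def by (rule bij_betw_inv_into) (rule bij_betw_rank)

lemma rank_unrank: "inj_on g {..<n} \<Longrightarrow> t < n \<Longrightarrow> rank g n (unrank g n t) = t"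
  unfolding unrank_def by (metis bij_betw_imp_surj_on bij_betw_rank f_inv_into_f lessThan_iff)

lemma unrank_rank: "inj_on g {..<n} \<Longrightarrow> i < n \<Longrightarrow> unrank g n (rank g n i) = i"
  unfolding unrank_def by (metis bij_betw_imp_inj_on bij_betw_rank inv_into_f_f lessThan_iff)

lemma unrank_strict_antimono:
  assumes "inj_on g {..<n}" "s < t" "t < n"
  shows "g (unrank g n t) < g (unrank g n s)"
proof -
  have s: "unrank g n s < n" and t: "unrank g n t < n"
    using bij_betw_unrank[OF assms(1)] assms(2,3) by (auto dest: bij_betwE)
  have "unrank g n s \<noteq> unrank g n t"
    using rank_unrank[OF assms(1)] assms(2,3) by (metis less_trans less_irrefl)
  then have "g (unrank g n s) \<noteq> g (unrank g n t)"
    using assms(1) s t by (auto dest: inj_onD)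
  moreover have "\<not> g (unrank g n s) < g (unrank g n t)"
    using rank_less_rank[of "unrank g n s" n "unrank g n t" g] s t rank_unrank[OF assms(1)] assms(2,3)
    by auto
  ultimately show ?thesis by auto
qed

text \<open>Ties of \<open>\<lambda>\<close> are broken by the index through the term \<open>- i\<close>, as \<open>|i - j| < n\<close>.\<close>

definition rho_key :: "int list \<Rightarrow> nat \<Rightarrow> int" where
  "rho_key lam i = lam ! i * int (length lam) - int i"

lemma rho_key_diff_less_iff:
  assumes "i < length lam" "j < length lam"
  shows "rho_key lam i - rho_key lam j < c * int (length lam)
    \<longleftrightarrow> lam ! i - lam ! j < c \<or> (lam ! i - lam ! j = c \<and> j < i)"
proof -
  define n where "n = int (length lam)"
  define e where "e = lam ! i - lam ! j - c"
  have diff: "rho_key lam i - rho_key lam j - c * n = e * n - (int i - int j)"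
    by (simp add: rho_key_def e_def n_def algebra_simps)
  have ij: "\<bar>int i - int j\<bar> < n" "0 \<le> n" using assms by (auto simp: n_def)
  consider "e \<le> -1" | "e = 0" | "1 \<le> e" by linarith
  then have "rho_key lam i - rho_key lam j < c * n
    \<longleftrightarrow> lam ! i - lam ! j < c \<or> (lam ! i - lam ! j = c \<and> j < i)"
  proof cases
    case 1
    then have "e * n \<le> - 1 * n" using ij by (intro mult_right_mono) auto
    then show ?thesis using diff ij 1 by (simp add: e_def)
  next
    case 2
    then show ?thesis using diff by (auto simp: e_def)
  next
    case 3
    then have "1 * n \<le> e * n" using ij by (intro mult_right_mono) auto
    then show ?thesis using diff ij 3 by (simp add: e_def)
  qed
  then show ?thesis by (simp add: n_def)
qed

lemma rho_key_less_iff: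
  "i < length lam \<Longrightarrow> j < length lam \<Longrightarrow>
    rho_key lam i < rho_key lam j \<longleftrightarrow> lam ! i < lam ! j \<or> (lam ! i = lam ! j \<and> j < i)"
  using rho_key_diff_less_iff[of i lam j 0] by simp

lemma inj_on_rho_key: "inj_on (rho_key lam) {..<length lam}"
  by (rule inj_onI) (use rho_key_less_iff in \<open>metis lessThan_iff less_irrefl neqE\<close>)

lemma rho_eq_rank:
  assumes "i < length lam"
  shows "rho lam i = (real (length lam) - 1) / 2 - real (rank (rho_key lam) (length lam) i)"
proof -
  have "{j. j < length lam \<and> (lam ! j > lam ! i \<or> (lam ! j = lam ! i \<and> j < i))}
      = {j. j < length lam \<and> rho_key lam i < rho_key lam j}"
    using rho_key_less_iff[OF assms] by auto
  then show ?thesis by (simp add: rho_def rank_def)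
qed

lemma is_nbhd_iff_rank:
  assumes "1 \<le> a"
  shows "is_nbhd lam a b (i, j) \<longleftrightarrow> i < length lam \<and> j < length lam
    \<and> rank (rho_key lam) (length lam) j = rank (rho_key lam) (length lam) i + (a - 1)
    \<and> rho_key lam i - rho_key lam j < int b * int (length lam)"
proof (cases "i < length lam \<and> j < length lam")
  case True
  then have "lam ! i - lam ! j \<le> int b - 1 \<or> (lam ! i - lam ! j = int b \<and> j < i)
      \<longleftrightarrow> rho_key lam i - rho_key lam j < int b * int (length lam)"
    using rho_key_diff_less_iff[of i lam j "int b"] by auto
  with True assms show ?thesis
    unfolding is_nbhd_def by (auto simp: rho_eq_rank)
qed (auto simp: is_nbhd_def)

lemma nbhd_contains_short_nbhd:
  fixes lam :: "int list"
  defines "n \<equiv> length lam" and "g \<equiv> rho_key lam"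
  assumes nbhd: "is_nbhd lam (m * (k + 1) + d) (m * b) (i, j)" and "0 < m" and "e \<le> d"
  shows "\<exists>t. t + k < n \<and> t mod (k + 1) = (rank g n i + e) mod (k + 1)
    \<and> is_nbhd lam (k + 1) b (unrank g n t, unrank g n (t + k))"
proof -
  define f where "f t = g (unrank g n t)" for t
  define p where "p = rank g n i"
  have inj: "inj_on g {..<n}" using inj_on_rho_key by (simp add: g_def n_def)
  have ij: "i < n" "j < n" and q: "rank g n j = p + m * (k + 1) + d - 1"
    and drop: "g i - g j < int (m * b) * int n"
    using nbhd \<open>0 < m\<close> by (auto simp: is_nbhd_iff_rank p_def g_def n_def)
  define q where "q = rank g n j"
  have "q < n" using rank_less ij(2) by (simp add: q_def)
  have antitone: "f y \<le> f x" if "x \<le> y" "y \<le> q" for x y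
    using unrank_strict_antimono[OF inj, of x y] that \<open>q < n\<close>
    by (cases "x = y") (auto simp: f_def)
  have "f p - f q < int m * (int b * int n)"
    using drop unrank_rank[OF inj] ij by (simp add: f_def p_def q_def)
  then have "\<exists>l<m. f (p + e + l * (k + 1)) - f (p + e + l * (k + 1) + k) < int b * int n"
    by (intro block_with_small_drop[where a = p and b = q])
      (use antitone \<open>0 < m\<close> \<open>e \<le> d\<close> q in \<open>auto simp: q_def\<close>)
  then obtain l where "l < m"
    and small: "f (p + e + l * (k + 1)) - f (p + e + l * (k + 1) + k) < int b * int n"
    by blast
  define t where "t = p + e + l * (k + 1)"
  have "t + k \<le> q"
  proof -
    have "Suc l * (k + 1) \<le> m * (k + 1)" using \<open>l < m\<close> by (intro mult_le_mono1) simp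
    then show ?thesis using q \<open>e \<le> d\<close> by (simp add: t_def q_def)
  qed
  then have "t + k < n" using \<open>q < n\<close> by simp
  moreover have "t mod (k + 1) = (p + e) mod (k + 1)" by (simp only: t_def mod_mult_self1)
  moreover have "is_nbhd lam (k + 1) b (unrank g n t, unrank g n (t + k))"
    using \<open>t + k < n\<close> small bij_betw_unrank[OF inj] rank_unrank[OF inj]
    by (subst is_nbhd_iff_rank) (auto simp: f_def t_def g_def n_def dest: bij_betwE)
  ultimately show ?thesis by (auto simp: p_def)
qed

theorem lemma4p3:
  fixes lam :: "int list" and k r m :: nat
  assumes "1 \<le> k" and "k \<le> length lam - 1" and "2 \<le> r" and "1 \<le> m"
  shows "(has_nbhd lam (m * (k + 1)) (m * (r - 1)) \<longrightarrow> has_nbhd lam (k + 1) (r - 1))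
    \<and> (\<forall>d::nat. 1 \<le> d \<longrightarrow> has_nbhd lam (m * (k + 1) + d) (m * (r - 1)) \<longrightarrow>
         (\<exists>p q. p \<noteq> q \<and> is_nbhd lam (k + 1) (r - 1) p \<and> is_nbhd lam (k + 1) (r - 1) q))"
proof (intro conjI impI allI)
  assume "has_nbhd lam (m * (k + 1)) (m * (r - 1))"
  then obtain i j where "is_nbhd lam (m * (k + 1) + 0) (m * (r - 1)) (i, j)"
    by (auto simp: has_nbhd_def)
  then show "has_nbhd lam (k + 1) (r - 1)"
    using nbhd_contains_short_nbhd[of lam m k 0 "r - 1" i j 0] assms(4)
    by (auto simp: has_nbhd_def)
next
  fix d :: nat
  assume "1 \<le> d" and "has_nbhd lam (m * (k + 1) + d) (m * (r - 1))"
  then obtain i j where nbhd: "is_nbhd lam (m * (k + 1) + d) (m * (r - 1)) (i, j)"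
    by (auto simp: has_nbhd_def)
  let ?n = "length lam" and ?g = "rho_key lam"
  have "0 < m" using assms(4) by simp
  obtain t1 where t1: "t1 + k < ?n" "t1 mod (k + 1) = rank ?g ?n i mod (k + 1)"
    "is_nbhd lam (k + 1) (r - 1) (unrank ?g ?n t1, unrank ?g ?n (t1 + k))"
    using nbhd_contains_short_nbhd[OF nbhd \<open>0 < m\<close>, of 0] by auto
  obtain t2 where t2: "t2 + k < ?n" "t2 mod (k + 1) = (rank ?g ?n i + 1) mod (k + 1)"
    "is_nbhd lam (k + 1) (r - 1) (unrank ?g ?n t2, unrank ?g ?n (t2 + k))"
    using nbhd_contains_short_nbhd[OF nbhd \<open>0 < m\<close> \<open>1 \<le> d\<close>] by auto
  have "t1 \<noteq> t2"
    using t1(2) t2(2) assms(1) by (auto simp: mod_Suc split: if_splits)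
  then have "unrank ?g ?n t1 \<noteq> unrank ?g ?n t2"
    using bij_betw_unrank[OF inj_on_rho_key] add_lessD1[OF t1(1)] add_lessD1[OF t2(1)]
    by (auto simp: bij_betw_def dest: inj_onD)
  then show "\<exists>p q. p \<noteq> q \<and> is_nbhd lam (k + 1) (r - 1) p \<and> is_nbhd lam (k + 1) (r - 1) q"
    using t1(3) t2(3) by blast
qed

end
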